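(* Let $G$ be a board that is symmetric under reflection across some line, with no edges lying along that axis of symmetry and at most one edge crossing that axis. If no edge crosses the axis of symmetry, then Player~2 has a winning strategy in the Game of Cycles on $G$. If a single edge crosses the axis of symmetry, then Player~1 has a winning strategy.
   Context: The Game of Cycles. A board is a simple connected planar graph embedded in the plane, together with its bounded cells; here the embedded board is invariant under reflection across a line. Two players alternate turns; on a turn a player marks one unmarked edge with an arrow pointing along the edge in one of its two directions. Each edge receives at most one arrow, and arrows have the same effect regardless of who placed them. Moves must obey the sink-source rule: no move may create a sink (a vertex all of whose incident edges are marked with arrows pointing toward it) or a source (a vertex all of whose incident edges are marked with arrows pointing away from it). A player who has a legal move must make one. A cycle cell is a bounded cell all of whose boundary edges are marked with arrows all cycling in the same direction around that cell. The first player to create a cycle cell wins; if play ends (no legal move remains) without a cycle cell, the player who made the last move wins. A winning strategy guarantees a win regardless of the opponent's moves. *)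

theory Defs
  imports "HOL-Complex_Analysis.Complex_Analysis"
begin

text \<open>A board is given by a finite vertex set V of points of the plane, a set E of edges,
  each edge being a two-element set of vertices (so the graph is simple), and an embedding
  emb which assigns to each edge an arc (injective path) joining its two endpoints.\<close>

definition board :: "complex set \<Rightarrow> complex set set \<Rightarrow> (complex set \<Rightarrow> real \<Rightarrow> complex) \<Rightarrow> bool" where
  "board V E emb \<longleftrightarrow>
     finite V \<and> V \<noteq> {} \<and>
     (\<forall>e\<in>E. \<exists>u v. u \<in> V \<and> v \<in> V \<and> u \<noteq> v \<and> e = {u, v}) \<and>
     (\<forall>e\<in>E. arc (emb e) \<and> {pathstart (emb e), pathfinish (emb e)} = e
              \<and> path_image (emb e) \<inter> V = e) \<and>
     (\<forall>e\<in>E. \<forall>e'\<in>E. e \<noteq> e' \<longrightarrow> path_image (emb e) \<inter> path_image (emb e') \<subseteq> e \<inter> e') \<and>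
     (\<forall>u\<in>V. \<forall>v\<in>V. (u, v) \<in> {(x, y). {x, y} \<in> E}\<^sup>*)"

definition drawing :: "complex set \<Rightarrow> complex set set \<Rightarrow> (complex set \<Rightarrow> real \<Rightarrow> complex) \<Rightarrow> complex set" where
  "drawing V E emb = V \<union> (\<Union>e\<in>E. path_image (emb e))"

definition cells :: "complex set \<Rightarrow> complex set set \<Rightarrow> (complex set \<Rightarrow> real \<Rightarrow> complex) \<Rightarrow> complex set set" where
  "cells V E emb = {c \<in> components (- drawing V E emb). bounded c}"

definition bedges :: "complex set set \<Rightarrow> (complex set \<Rightarrow> real \<Rightarrow> complex) \<Rightarrow> complex set \<Rightarrow> complex set set" where
  "bedges E emb c = {e \<in> E. path_image (emb e) \<subseteq> frontier c}"

text \<open>A marking is a set M of directed edges (u,v), meaning the edge {u,v} carries an arrow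
  pointing from u to v. The arc of a directed edge, traversed in the arrow direction:\<close>
definition darc :: "(complex set \<Rightarrow> real \<Rightarrow> complex) \<Rightarrow> complex \<times> complex \<Rightarrow> real \<Rightarrow> complex" where
  "darc emb p = (if pathstart (emb {fst p, snd p}) = fst p then emb {fst p, snd p}
                 else reversepath (emb {fst p, snd p}))"

definition marked :: "(complex \<times> complex) set \<Rightarrow> complex set \<Rightarrow> bool" where
  "marked M e \<longleftrightarrow> (\<exists>u v. e = {u, v} \<and> (u, v) \<in> M)"

definition is_sink :: "complex set set \<Rightarrow> (complex \<times> complex) set \<Rightarrow> complex \<Rightarrow> bool" where
  "is_sink E M v \<longleftrightarrow> (\<forall>w. {v, w} \<in> E \<longrightarrow> (w, v) \<in> M)"

definition is_source :: "complex set set \<Rightarrow> (complex \<times> complex) set \<Rightarrow> complex \<Rightarrow> bool" where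
  "is_source E M v \<longleftrightarrow> (\<forall>w. {v, w} \<in> E \<longrightarrow> (v, w) \<in> M)"

text \<open>A legal move in position M: mark an unmarked edge with an arrow, without creating a
  sink or a source (only the endpoints of the new arrow can change status).\<close>
definition legal_move :: "complex set set \<Rightarrow> (complex \<times> complex) set \<Rightarrow> complex \<times> complex \<Rightarrow> bool" where
  "legal_move E M p \<longleftrightarrow>
     {fst p, snd p} \<in> E \<and> \<not> marked M {fst p, snd p} \<and>
     \<not> is_sink E (insert p M) (fst p) \<and> \<not> is_source E (insert p M) (fst p) \<and>
     \<not> is_sink E (insert p M) (snd p) \<and> \<not> is_source E (insert p M) (snd p)"

text \<open>A cycle cell: all boundary edges of the cell are marked and the arrows all cycle in the
  same direction around the cell, i.e. the 1-chain formed by the directed boundary arcs is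
  the (counterclockwise or clockwise) oriented boundary of the cell: its winding number is
  s = 1 or s = -1 at every point of the cell and 0 at every point off the drawing outside
  the cell.\<close>
definition cycle_cell :: "complex set \<Rightarrow> complex set set \<Rightarrow> (complex set \<Rightarrow> real \<Rightarrow> complex)
    \<Rightarrow> (complex \<times> complex) set \<Rightarrow> complex set \<Rightarrow> bool" where
  "cycle_cell V E emb M c \<longleftrightarrow>
     c \<in> cells V E emb \<and>
     (\<forall>e\<in>bedges E emb c. marked M e) \<and>
     (\<exists>s \<in> {1, -1}. \<forall>z. z \<notin> drawing V E emb \<longrightarrow>
        (\<Sum>p\<in>{p \<in> M. {fst p, snd p} \<in> bedges E emb c}. winding_number (darc emb p) z)
          = (if z \<in> c then s else 0))"

definition has_cycle_cell :: "complex set \<Rightarrow> complex set set \<Rightarrow> (complex set \<Rightarrow> real \<Rightarrow> complex)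
    \<Rightarrow> (complex \<times> complex) set \<Rightarrow> bool" where
  "has_cycle_cell V E emb M \<longleftrightarrow> (\<exists>c. cycle_cell V E emb M c)"

text \<open>wins M: the player to move in position M (no cycle cell yet) has a winning strategy;
  loses M: the opponent of the player to move has a winning strategy.  A move creating a
  cycle cell wins immediately; a player with no legal move has lost (the opponent made the
  last move).  Since every move marks a new edge, the game is finite and these inductive
  (least fixed point) predicates express existence of winning strategies.\<close>
inductive wins :: "complex set \<Rightarrow> complex set set \<Rightarrow> (complex set \<Rightarrow> real \<Rightarrow> complex)
    \<Rightarrow> (complex \<times> complex) set \<Rightarrow> bool"
  and loses :: "complex set \<Rightarrow> complex set set \<Rightarrow> (complex set \<Rightarrow> real \<Rightarrow> complex)
    \<Rightarrow> (complex \<times> complex) set \<Rightarrow> bool"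
  for V E emb where
  win_cycle: "legal_move E M p \<Longrightarrow> has_cycle_cell V E emb (insert p M) \<Longrightarrow> wins V E emb M"
| win_move: "legal_move E M p \<Longrightarrow> loses V E emb (insert p M) \<Longrightarrow> wins V E emb M"
| lose: "(\<And>p. legal_move E M p \<Longrightarrow>
            \<not> has_cycle_cell V E emb (insert p M) \<and> wins V E emb (insert p M))
         \<Longrightarrow> loses V E emb M"

text \<open>Reflection across the line through a with direction w (w \<noteq> 0).\<close>
definition reflect :: "complex \<Rightarrow> complex \<Rightarrow> complex \<Rightarrow> complex" where
  "reflect a w z = a + (w / cnj w) * cnj (z - a)"

definition sym_axis :: "complex \<Rightarrow> complex \<Rightarrow> complex set" where
  "sym_axis a w = {a + of_real t * w | t. True}"

definition reflection_invariant :: "complex set \<Rightarrow> complex set set \<Rightarrow> (complex set \<Rightarrow> real \<Rightarrow> complex)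
    \<Rightarrow> complex \<Rightarrow> complex \<Rightarrow> bool" where
  "reflection_invariant V E emb a w \<longleftrightarrow>
     reflect a w ` V = V \<and>
     (\<forall>e\<in>E. reflect a w ` e \<in> E \<and>
             path_image (emb (reflect a w ` e)) = reflect a w ` path_image (emb e))"

definition side :: "complex \<Rightarrow> complex \<Rightarrow> complex \<Rightarrow> real" where
  "side a w z = Im ((z - a) / w)"

definition crosses_axis :: "complex \<Rightarrow> complex \<Rightarrow> complex set \<Rightarrow> bool" where
  "crosses_axis a w e \<longleftrightarrow> (\<exists>u v. e = {u, v} \<and> side a w u < 0 \<and> 0 < side a w v)"

end

theory Submission
  imports Defs
begin

(* Answer each arrow u -> v by the reversed mirror arrow sigma v -> sigma u,
   where sigma is the reflection.  An edge mapped onto itself by sigma crosses the axis, hence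
   once the crossing edge, if any, is marked, the reply is legal and keeps the position symmetric.
   The reply never lets the opponent close a cycle cell: the closing move would have to use the
   edge of the reply; a symmetric cell cannot be completed from a symmetric position; and an
   asymmetric cell lies on one side of the axis, shares no boundary edge with its mirror image,
   and so the mirror of the closing move would have closed the mirrored cell one move earlier.
   Without a crossing edge the second player mirrors from the start; with one, the first player
   marks it first (its arrow is its own reply) and then mirrors. *)

section \<open>Reflection in a line\<close>

lemma reflect_reflect [simp]: "w \<noteq> 0 \<Longrightarrow> reflect a w (reflect a w z) = z"
  unfolding reflect_def by (simp add: field_simps)

lemma reflect_conv: "w \<noteq> 0 \<Longrightarrow> reflect a w z = a + w * cnj ((z - a) / w)"
  unfolding reflect_def by (simp add: field_simps)

lemma side_reflect: "w \<noteq> 0 \<Longrightarrow> side a w (reflect a w z) = - side a w z"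
  by (simp add: side_def reflect_conv del: complex_cnj_divide complex_cnj_diff)

lemma reflect_eq_self_iff: "w \<noteq> 0 \<Longrightarrow> reflect a w z = z \<longleftrightarrow> side a w z = 0"
proof -
  assume w: "w \<noteq> 0"
  have "reflect a w z = z \<longleftrightarrow> cnj ((z - a) / w) = (z - a) / w"
    unfolding reflect_conv[OF w] using w by (auto simp: field_simps)
  then show ?thesis
    by (simp add: side_def complex_eq_iff del: complex_cnj_divide complex_cnj_diff)
qed

lemma mem_sym_axis_iff: "w \<noteq> 0 \<Longrightarrow> z \<in> sym_axis a w \<longleftrightarrow> side a w z = 0"
proof
  assume "w \<noteq> 0" "side a w z = 0"
  then have "(z - a) / w = of_real (Re ((z - a) / w))" by (simp add: side_def complex_eq_iff)
  then have "z = a + of_real (Re ((z - a) / w)) * w" using \<open>w \<noteq> 0\<close> by (simp add: field_simps)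
  then show "z \<in> sym_axis a w" by (auto simp: sym_axis_def)
qed (auto simp: sym_axis_def side_def)

lemma dist_reflect: "w \<noteq> 0 \<Longrightarrow> dist (reflect a w x) (reflect a w y) = dist x y"
proof -
  assume "w \<noteq> 0"
  then have "reflect a w x - reflect a w y = w * cnj ((x - y) / w)"
    by (simp add: reflect_conv algebra_simps diff_divide_distrib)
  then show ?thesis
    using \<open>w \<noteq> 0\<close> by (simp add: dist_norm norm_mult norm_divide del: complex_cnj_divide complex_cnj_diff)
qed

lemma continuous_on_reflect: "continuous_on S (reflect a w)"
  unfolding reflect_def by (intro continuous_intros)

lemma continuous_on_side: "w \<noteq> 0 \<Longrightarrow> continuous_on S (side a w)"
  unfolding side_def by (intro continuous_intros) auto

lemma winding_number_reflect:
  assumes "w \<noteq> 0" and "path g" and "z \<notin> path_image g"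
  shows "winding_number (reflect a w \<circ> g) (reflect a w z) = - cnj (winding_number g z)"
proof -
  obtain q where q: "path q" "pathfinish q - pathstart q = 2 * of_real pi * \<i> * winding_number g z"
    "\<And>t. t \<in> {0..1} \<Longrightarrow> g t = z + exp (q t)"
    using winding_number_as_continuous_log assms by metis
  define L where "L = Ln (w / cnj w)"
  have exp_L: "exp L = w / cnj w" using \<open>w \<noteq> 0\<close> by (simp add: L_def)
  have "path (\<lambda>t. L + cnj (q t))" using q(1) unfolding path_def by (intro continuous_intros)
  note log = winding_number_compose_exp[OF this]
  have "winding_number (reflect a w \<circ> g) (reflect a w z)
        = winding_number (\<lambda>t. (reflect a w \<circ> g) t - reflect a w z) 0"
    by (rule winding_number_offset)
  also have "\<dots> = winding_number (exp \<circ> (\<lambda>t. L + cnj (q t))) 0"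
    by (rule winding_number_cong) (simp add: q(3) reflect_def exp_add exp_L exp_cnj algebra_simps)
  also have "\<dots> = cnj (pathfinish q - pathstart q) / (2 * of_real pi * \<i>)"
    using log by (simp add: pathfinish_def pathstart_def)
  also have "\<dots> = - cnj (winding_number g z)" unfolding q(2) by (simp add: field_simps)
  finally show ?thesis .
qed

section \<open>Arcs and winding numbers\<close>

lemma winding_number_real_imp_equidistant:
  assumes "path g" and "z \<notin> path_image g" and "Im (winding_number g z) = 0"
  shows "dist (pathfinish g) z = dist (pathstart g) z"
proof -
  obtain q where q: "pathfinish q - pathstart q = 2 * of_real pi * \<i> * winding_number g z"
    "\<And>t. t \<in> {0..1} \<Longrightarrow> g t = z + exp (q t)"
    using winding_number_as_continuous_log assms by metis
  have "Re (q 1) = Re (q 0)"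
    using arg_cong[OF q(1), of Re] assms(3) by (simp add: pathfinish_def pathstart_def)
  then show ?thesis using q(2)[of 0] q(2)[of 1] by (simp add: dist_norm pathfinish_def pathstart_def)
qed

lemma open_subset_bisector_empty:
  fixes u v :: "'a::real_inner"
  assumes "open S" and "\<forall>z\<in>S. dist v z = dist u z" and "u \<noteq> v"
  shows "S = {}"
proof -
  have "S \<subseteq> {z. (v - u) \<bullet> z = (v \<bullet> v - u \<bullet> u) / 2}"
    using assms(2) by (auto simp: dist_norm norm_eq_sqrt_inner inner_commute algebra_simps)
  then have "S \<subseteq> interior {z. (v - u) \<bullet> z = (v \<bullet> v - u \<bullet> u) / 2}"
    using assms(1) by (rule interior_maximal)
  moreover have "v - u \<noteq> 0" using assms(3) by simp
  ultimately show ?thesis using interior_hyperplane[of "v - u" "(v \<bullet> v - u \<bullet> u) / 2"] by blast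
qed

lemma continuous_inj_strict_mono_on_unit_interval:
  fixes \<phi> :: "real \<Rightarrow> real"
  assumes "continuous_on {0..1} \<phi>" "inj_on \<phi> {0..1}" "\<phi> ` {0..1} \<subseteq> {0..1}" "\<phi> 0 = 0"
  shows "strict_mono_on {0..1} \<phi>"
proof (rule strict_mono_onI)
  fix x y :: real assume x: "x \<in> {0..1}" and y: "y \<in> {0..1}" and "x < y"
  have "\<phi> 0 < \<phi> x" if "0 < x"
    using that x assms inj_onD[OF assms(2), of x 0] by fastforce
  moreover have "(\<phi> 0 < \<phi> x \<and> \<phi> x < \<phi> y) \<or> (\<phi> y < \<phi> x \<and> \<phi> x < \<phi> 0)" if "0 < x"
    using that \<open>x < y\<close> y continuous_on_subset[OF assms(1)] inj_on_subset[OF assms(2)]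
    by (intro continuous_inj_imp_mono) auto
  moreover have "\<phi> 0 < \<phi> y"
    using \<open>x < y\<close> x y assms inj_onD[OF assms(2), of y 0] by fastforce
  ultimately show "\<phi> x < \<phi> y" using x assms(4) by (cases "x = 0") auto
qed

lemma strict_mono_on_involution_eq_id:
  fixes \<phi> :: "real \<Rightarrow> real"
  assumes "strict_mono_on S \<phi>" "\<phi> ` S \<subseteq> S" "\<And>t. t \<in> S \<Longrightarrow> \<phi> (\<phi> t) = t" "t \<in> S"
  shows "\<phi> t = t"
proof (rule ccontr)
  assume "\<phi> t \<noteq> t"
  moreover have "\<phi> t \<in> S" using assms by auto
  ultimately show False
    using assms strict_mono_onD[OF assms(1), of t "\<phi> t"] strict_mono_onD[OF assms(1), of "\<phi> t" t]
    by (cases "\<phi> t < t") auto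
qed

lemma arc_compose:
  assumes "arc g" "continuous_on (path_image g) f" "inj_on f (path_image g)"
  shows "arc (f \<circ> g)"
  using assms unfolding arc_def
  by (auto intro: path_continuous_image comp_inj_on simp: path_image_def)

lemma arc_reparametrization:
  fixes g h :: "real \<Rightarrow> 'a::t2_space"
  assumes "arc g" "arc h" "path_image h = path_image g"
    and "pathstart h = pathstart g" "pathfinish h = pathfinish g"
  obtains \<phi> where "continuous_on {0..1} \<phi>" "inj_on \<phi> {0..1}" "\<phi> ` {0..1} \<subseteq> {0..1}"
    "\<phi> 0 = 0" "\<phi> 1 = 1" "\<And>t. t \<in> {0..1} \<Longrightarrow> h t = g (\<phi> t)"
proof -
  obtain g' where hom: "homeomorphism {0..1} (path_image g) g g'"
    using homeomorphism_compact[of "{0..1::real}" g] assms(1)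
    by (auto simp: arc_def path_def path_image_def)
  then have g': "\<And>t. t \<in> {0..1} \<Longrightarrow> g' (g t) = t" "\<And>z. z \<in> path_image g \<Longrightarrow> g (g' z) = z"
    "g' ` path_image g = {0..1}" "continuous_on (path_image g) g'"
    by (auto simp: homeomorphism_def)
  have h_in: "h t \<in> path_image g" if "t \<in> {0..1}" for t
    using assms(3) that by (auto simp: path_image_def)
  show ?thesis
  proof
    show "continuous_on {0..1} (g' \<circ> h)"
      using assms(2) h_in by (intro continuous_on_compose continuous_on_subset[OF g'(4)])
        (auto simp: arc_def path_def)
    show "inj_on (g' \<circ> h) {0..1}"
    proof (rule inj_onI)
      fix s t assume "s \<in> {0..1}" "t \<in> {0..1}" "(g' \<circ> h) s = (g' \<circ> h) t"
      then have "h s = h t" using g'(2) h_in by (metis comp_apply)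
      then show "s = t" using arc_imp_inj_on[OF assms(2)] \<open>s \<in> {0..1}\<close> \<open>t \<in> {0..1}\<close> by (auto dest: inj_onD)
    qed
    show "(g' \<circ> h) ` {0..1} \<subseteq> {0..1}" using h_in g'(3) by auto
    show "(g' \<circ> h) 0 = 0" "(g' \<circ> h) 1 = 1"
      using assms(4,5) g'(1)[of 0] g'(1)[of 1] by (simp_all add: pathstart_def pathfinish_def)
    show "h t = g ((g' \<circ> h) t)" if "t \<in> {0..1}" for t using g'(2) h_in that by simp
  qed
qed

lemma winding_number_arc_eq:
  assumes "arc g" "arc h" "path_image h = path_image g"
    and "pathstart h = pathstart g" "pathfinish h = pathfinish g" "z \<notin> path_image g"
  shows "winding_number h z = winding_number g z"
proof -
  obtain \<phi> where "continuous_on {0..1} \<phi>" "\<phi> ` {0..1} \<subseteq> {0..1}" "\<phi> 0 = 0" "\<phi> 1 = 1"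
    "\<And>t. t \<in> {0..1} \<Longrightarrow> h t = g (\<phi> t)"
    using arc_reparametrization[OF assms(1-5)] by metis
  then have "homotopic_paths (-{z}) g h"
    using assms(1,6) by (intro homotopic_paths_reparametrize) (auto simp: arc_imp_path)
  then show ?thesis by (simp add: winding_number_homotopic_paths)
qed

text \<open>An involution of an arc fixing its endpoints reparametrizes it by an increasing
  involution of the unit interval, which must be the identity.\<close>
lemma arc_involution_fixes_points:
  fixes g :: "real \<Rightarrow> 'a::t2_space"
  assumes g: "arc g" and f: "continuous_on (path_image g) f" "f ` path_image g \<subseteq> path_image g"
    and invol: "\<And>z. z \<in> path_image g \<Longrightarrow> f (f z) = z"
    and ends: "f (pathstart g) = pathstart g" "f (pathfinish g) = pathfinish g"
    and z: "z \<in> path_image g"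
  shows "f z = z"
proof -
  have inj: "inj_on f (path_image g)" using invol by (rule inj_on_inverseI)
  have "path_image g \<subseteq> f ` path_image g"
  proof
    fix y assume "y \<in> path_image g"
    then show "y \<in> f ` path_image g" using f(2) invol by (intro image_eqI[where x = "f y"]) auto
  qed
  then have "path_image (f \<circ> g) = path_image g" using f(2) by (simp add: path_image_compose)
  then obtain \<phi> where \<phi>: "continuous_on {0..1} \<phi>" "inj_on \<phi> {0..1}" "\<phi> ` {0..1} \<subseteq> {0..1}"
      "\<phi> 0 = 0" "\<phi> 1 = 1" "\<And>t. t \<in> {0..1} \<Longrightarrow> f (g t) = g (\<phi> t)"
    using arc_reparametrization[OF g arc_compose[OF g f(1) inj]] ends
    by (auto simp: pathstart_def pathfinish_def)
  have "\<phi> (\<phi> t) = t" if t: "t \<in> {0..1}" for t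
  proof -
    have "\<phi> t \<in> {0..1}" using \<phi>(3) t by blast
    then have "g (\<phi> (\<phi> t)) = g t"
      using \<phi>(6) t invol by (metis path_image_def imageI)
    moreover have "\<phi> (\<phi> t) \<in> {0..1}" using \<phi>(3) \<open>\<phi> t \<in> {0..1}\<close> by blast
    ultimately show ?thesis using arc_imp_inj_on[OF g] t by (auto dest: inj_onD)
  qed
  then have "\<phi> t = t" if "t \<in> {0..1}" for t
    using strict_mono_on_involution_eq_id continuous_inj_strict_mono_on_unit_interval[OF \<phi>(1-4)] \<phi>(3) that
    by blast
  then show ?thesis using z \<phi>(6) by (auto simp: path_image_def)
qed

abbreviation arrow_edge :: "complex \<times> complex \<Rightarrow> complex set" where
  "arrow_edge p \<equiv> {fst p, snd p}"

lemma marked_iff: "marked M e \<longleftrightarrow> (\<exists>p\<in>M. arrow_edge p = e)"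
  unfolding marked_def by force

lemma marked_insert: "marked (insert p M) e \<longleftrightarrow> e = arrow_edge p \<or> marked M e"
  unfolding marked_iff by auto

lemma marked_mono: "marked M e \<Longrightarrow> M \<subseteq> N \<Longrightarrow> marked N e"
  unfolding marked_def by blast

lemma legal_move_antimono: "legal_move E N p \<Longrightarrow> M \<subseteq> N \<Longrightarrow> legal_move E M p"
  unfolding legal_move_def marked_def is_sink_def is_source_def by blast

lemma is_sink_insert: "is_sink E (insert p M) x \<Longrightarrow> \<not> is_sink E M x \<Longrightarrow> x = snd p"
  unfolding is_sink_def by auto

lemma is_source_insert: "is_source E (insert p M) x \<Longrightarrow> \<not> is_source E M x \<Longrightarrow> x = fst p"
  unfolding is_source_def by auto

text \<open>Two moves that are legal in the same position stay legal one after the other, unless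
  they share their head or their tail: only such a shared endpoint can turn into a sink or source.\<close>
lemma legal_move_insert:
  assumes p: "legal_move E M p" and q: "legal_move E M q" and "arrow_edge q \<noteq> arrow_edge p"
    and "fst p \<noteq> fst q" and "snd p \<noteq> snd q"
  shows "legal_move E (insert p M) q"
proof -
  have "\<not> is_sink E (insert q (insert p M)) x" if "x \<in> arrow_edge q" for x
  proof
    assume sink: "is_sink E (insert q (insert p M)) x"
    then have "x = snd p" using q that by (auto simp: legal_move_def insert_commute dest: is_sink_insert)
    then show False using sink p assms(5) by (auto simp: legal_move_def dest: is_sink_insert)
  qed
  moreover have "\<not> is_source E (insert q (insert p M)) x" if "x \<in> arrow_edge q" for x
  proof
    assume source: "is_source E (insert q (insert p M)) x"
    then have "x = fst p" using q that by (auto simp: legal_move_def insert_commute dest: is_source_insert)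
    then show False using source p assms(4) by (auto simp: legal_move_def dest: is_source_insert)
  qed
  ultimately show ?thesis using q assms(3) by (auto simp: legal_move_def marked_insert)
qed

locale plane_board =
  fixes V :: "complex set" and E :: "complex set set" and emb :: "complex set \<Rightarrow> real \<Rightarrow> complex"
  assumes board: "board V E emb"
begin

lemma finite_vertices: "finite V"
  using board by (simp add: board_def)

lemma edgeE:
  assumes "e \<in> E"
  obtains u v where "u \<in> V" "v \<in> V" "u \<noteq> v" "e = {u, v}"
proof -
  have "\<exists>u v. u \<in> V \<and> v \<in> V \<and> u \<noteq> v \<and> e = {u, v}" using board assms by (simp add: board_def)
  then show ?thesis using that by blast
qed

lemma edges_subset_Pow: "E \<subseteq> Pow V"
  by (auto elim!: edgeE)

lemma finite_edges: "finite E"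
  by (rule finite_subset[OF edges_subset_Pow]) (simp add: finite_vertices)

lemma edge_distinct:
  assumes "{u, v} \<in> E"
  shows "u \<noteq> v"
proof
  assume "u = v"
  obtain x y where "x \<noteq> y" "{u, v} = {x, y}" using edgeE[OF assms] by metis
  then show False using \<open>u = v\<close> by (auto simp: doubleton_eq_iff)
qed

lemma arc_emb: "e \<in> E \<Longrightarrow> arc (emb e)"
  and emb_ends: "e \<in> E \<Longrightarrow> {pathstart (emb e), pathfinish (emb e)} = e"
  using board by (auto simp: board_def)

lemma
  assumes "{u, v} \<in> E"
  shows arc_darc: "arc (darc emb (u, v))"
    and pathstart_darc: "pathstart (darc emb (u, v)) = u"
    and pathfinish_darc: "pathfinish (darc emb (u, v)) = v"
    and path_image_darc: "path_image (darc emb (u, v)) = path_image (emb {u, v})"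
proof -
  have "u \<noteq> v" using edge_distinct[OF assms] .
  moreover note ends = emb_ends[OF assms] and arc = arc_emb[OF assms]
  ultimately have "pathstart (emb {u, v}) = u \<and> pathfinish (emb {u, v}) = v
      \<or> pathstart (emb {u, v}) = v \<and> pathfinish (emb {u, v}) = u"
    by (metis doubleton_eq_iff)
  then show "arc (darc emb (u, v))" "pathstart (darc emb (u, v)) = u"
    "pathfinish (darc emb (u, v)) = v" "path_image (darc emb (u, v)) = path_image (emb {u, v})"
    using arc \<open>u \<noteq> v\<close> by (auto simp: darc_def arc_reversepath)
qed

lemma closed_drawing: "closed (drawing V E emb)"
proof -
  have "closed (\<Union>e\<in>E. path_image (emb e))"
    using finite_edges arc_emb
    by (intro closed_Union) (auto intro: compact_imp_closed arc_imp_path)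
  then show ?thesis using finite_vertices by (simp add: drawing_def closed_Un finite_imp_closed)
qed

lemma open_cell: "c \<in> cells V E emb \<Longrightarrow> open c"
  using closed_drawing by (auto simp: cells_def intro: open_components)

lemma cell_disjoint_drawing: "c \<in> cells V E emb \<Longrightarrow> z \<in> c \<Longrightarrow> z \<notin> drawing V E emb"
  by (auto simp: cells_def dest: in_components_subset)

lemma cell_nonempty: "c \<in> cells V E emb \<Longrightarrow> c \<noteq> {}"
  by (auto simp: cells_def dest: in_components_nonempty)

abbreviation boundary_arrows :: "(complex \<times> complex) set \<Rightarrow> complex set \<Rightarrow> (complex \<times> complex) set" where
  "boundary_arrows M c \<equiv> {p \<in> M. arrow_edge p \<in> bedges E emb c}"

lemma cycle_cell_cong:
  assumes "\<And>p. arrow_edge p \<in> bedges E emb c \<Longrightarrow> p \<in> M \<longleftrightarrow> p \<in> N"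
    and "cycle_cell V E emb M c"
  shows "cycle_cell V E emb N c"
proof -
  have "boundary_arrows M c = boundary_arrows N c" using assms(1) by blast
  moreover have "marked M e \<longleftrightarrow> marked N e" if "e \<in> bedges E emb c" for e
    using assms(1) that unfolding marked_iff by auto
  ultimately show ?thesis using assms(2) unfolding cycle_cell_def by auto
qed

text \<open>The winding number of a single arc about the points of the cell would be real, so
  every point of the open cell would be equidistant from the two ends of the arc.\<close>
lemma single_arrow_not_cycle_cell: "\<not> cycle_cell V E emb {(u, v)} c"
proof
  assume cycle: "cycle_cell V E emb {(u, v)} c"
  then have c: "c \<in> cells V E emb" by (simp add: cycle_cell_def)
  obtain s where s: "s \<in> {1, -1}" and wind: "\<And>z. z \<notin> drawing V E emb \<Longrightarrow>
      (\<Sum>p\<in>boundary_arrows {(u, v)} c. winding_number (darc emb p) z) = (if z \<in> c then s else 0)"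
    using cycle unfolding cycle_cell_def by blast
  show False
  proof (cases "{u, v} \<in> bedges E emb c")
    case False
    then have no_arrows: "boundary_arrows {(u, v)} c = {}" by auto
    obtain z where z: "z \<in> c" using cell_nonempty[OF c] by blast
    then have "0 = s" using wind[OF cell_disjoint_drawing[OF c z]] unfolding no_arrows by simp
    then show False using s by auto
  next
    case True
    then have e: "{u, v} \<in> E" by (simp add: bedges_def)
    have one_arrow: "boundary_arrows {(u, v)} c = {(u, v)}" using True by auto
    have "dist v z = dist u z" if z: "z \<in> c" for z
    proof -
      have "z \<notin> path_image (darc emb (u, v))"
        using cell_disjoint_drawing[OF c z] e by (auto simp: path_image_darc drawing_def)
      moreover have "winding_number (darc emb (u, v)) z = s"
        using wind[OF cell_disjoint_drawing[OF c z]] z unfolding one_arrow by simp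
      ultimately show ?thesis
        using winding_number_real_imp_equidistant[of "darc emb (u, v)" z] s e
        by (auto simp: arc_imp_path arc_darc pathstart_darc pathfinish_darc)
    qed
    then have "c = {}" using open_cell[OF c] edge_distinct[OF e] by (intro open_subset_bisector_empty) auto
    then show False using cell_nonempty[OF c] by blast
  qed
qed

lemma single_edge_board:
  assumes "{u, v} \<in> E" and "\<And>x. {u, x} \<in> E \<Longrightarrow> x = v" and "\<And>x. {v, x} \<in> E \<Longrightarrow> x = u"
  shows "V = {u, v}"
proof -
  have "x \<in> {u, v}" if "(u, x) \<in> {(x, y). {x, y} \<in> E}\<^sup>*" for x
    using that
  proof (induction rule: rtrancl_induct)
    case (step y z)
    then have "{y, z} \<in> E" "y = u \<or> y = v" by auto
    then show ?case using assms(2,3) by auto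
  qed simp
  moreover have "u \<in> V" "v \<in> V" using assms(1) edges_subset_Pow by auto
  moreover have "\<forall>x\<in>V. (u, x) \<in> {(x, y). {x, y} \<in> E}\<^sup>*" using board \<open>u \<in> V\<close> by (simp add: board_def)
  ultimately show ?thesis by blast
qed

lemma card_unmarked_edges_less:
  assumes "legal_move E M p" "insert p M \<subseteq> N"
  shows "card {e \<in> E. \<not> marked N e} < card {e \<in> E. \<not> marked M e}"
proof -
  have "arrow_edge p \<in> {e \<in> E. \<not> marked M e}" "arrow_edge p \<notin> {e \<in> E. \<not> marked N e}"
    using assms by (auto simp: legal_move_def marked_iff)
  moreover have "{e \<in> E. \<not> marked N e} \<subseteq> {e \<in> E. \<not> marked M e}"
    using assms(2) marked_mono by blast
  ultimately show ?thesis using finite_edges by (intro psubset_card_mono) auto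
qed

definition has_winning_move :: "(complex \<times> complex) set \<Rightarrow> bool" where
  "has_winning_move M \<longleftrightarrow> (\<exists>p. legal_move E M p \<and> has_cycle_cell V E emb (insert p M))"

lemma no_winning_opening: "\<not> has_winning_move {}"
proof
  assume "has_winning_move {}"
  then obtain p c where "cycle_cell V E emb {p} c"
    unfolding has_winning_move_def has_cycle_cell_def by auto
  then show False using single_arrow_not_cycle_cell[of "fst p" "snd p" c] by simp
qed

end

section \<open>Symmetric boards\<close>

locale symmetric_board = plane_board +
  fixes a w :: complex
  assumes axis_direction: "w \<noteq> 0"
    and reflection_invariant: "reflection_invariant V E emb a w"
    and no_edge_on_axis: "\<forall>e\<in>E. \<not> path_image (emb e) \<subseteq> sym_axis a w"
begin

abbreviation \<sigma> where "\<sigma> \<equiv> reflect a w"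

lemma reflect_involutive [simp]: "\<sigma> (\<sigma> z) = z"
  using axis_direction by simp

lemma reflect_image_image [simp]: "\<sigma> ` \<sigma> ` S = S"
  by (force simp: image_iff)

lemma inj_reflect: "inj \<sigma>"
  by (rule inj_on_inverseI[where g = \<sigma>]) simp

lemma reflect_in_image_iff [simp]: "\<sigma> x \<in> \<sigma> ` S \<longleftrightarrow> x \<in> S"
  by (simp add: inj_image_mem_iff[OF inj_reflect])

lemma mem_reflect_image_iff: "z \<in> \<sigma> ` S \<longleftrightarrow> \<sigma> z \<in> S"
  using reflect_in_image_iff[of "\<sigma> z"] by simp

lemma reflect_edge_iff [simp]: "\<sigma> ` e \<in> E \<longleftrightarrow> e \<in> E"
  using reflection_invariant unfolding reflection_invariant_def by (metis reflect_image_image)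

lemma reflect_doubleton_edge_iff [simp]: "{\<sigma> u, \<sigma> v} \<in> E \<longleftrightarrow> {u, v} \<in> E"
  using reflect_edge_iff[of "{u, v}"] by simp

lemma path_image_emb_reflect: "e \<in> E \<Longrightarrow> path_image (emb (\<sigma> ` e)) = \<sigma> ` path_image (emb e)"
  using reflection_invariant by (simp add: reflection_invariant_def)

lemma reflect_in_drawing_iff [simp]: "\<sigma> z \<in> drawing V E emb \<longleftrightarrow> z \<in> drawing V E emb"
proof -
  have "\<sigma> z \<in> drawing V E emb" if z: "z \<in> drawing V E emb" for z
  proof -
    consider "z \<in> V" | e where "e \<in> E" "z \<in> path_image (emb e)"
      using z by (auto simp: drawing_def)
    then show ?thesis
    proof cases
      case 1
      then show ?thesis using reflection_invariant by (auto simp: drawing_def reflection_invariant_def)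
    next
      case 2
      then have "\<sigma> z \<in> path_image (emb (\<sigma> ` e))" by (simp add: path_image_emb_reflect)
      then show ?thesis using 2 reflect_edge_iff by (auto simp: drawing_def)
    qed
  qed
  then show ?thesis by (metis reflect_involutive)
qed

lemma reflect_cell:
  assumes "c \<in> cells V E emb"
  shows "\<sigma> ` c \<in> cells V E emb"
proof -
  have c: "c \<in> components (- drawing V E emb)" and "bounded c" using assms by (auto simp: cells_def)
  have c_maximal: "d = c" if "d \<noteq> {}" "c \<subseteq> d" "d \<subseteq> - drawing V E emb" "connected d" for d
    using c that unfolding in_components_maximal by simp
  have "\<sigma> ` c \<in> components (- drawing V E emb)"
    unfolding in_components_maximal
  proof (intro conjI allI impI)
    show "\<sigma> ` c \<noteq> {}" using c in_components_nonempty by auto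
    show "\<sigma> ` c \<subseteq> - drawing V E emb" using in_components_subset[OF c] by auto
    show "connected (\<sigma> ` c)"
      using in_components_connected[OF c] by (intro connected_continuous_image continuous_on_reflect)
    fix d assume d: "d \<noteq> {} \<and> \<sigma> ` c \<subseteq> d \<and> d \<subseteq> - drawing V E emb \<and> connected d"
    have "c \<subseteq> \<sigma> ` d" using d image_mono[of "\<sigma> ` c" d \<sigma>] by simp
    moreover have "connected (\<sigma> ` d)"
      using d by (intro connected_continuous_image continuous_on_reflect) auto
    moreover have "\<sigma> ` d \<subseteq> - drawing V E emb" using d by auto
    ultimately have "\<sigma> ` d = c" using d by (intro c_maximal) auto
    then show "d = \<sigma> ` c" using reflect_image_image[of d] by simp
  qed
  moreover have "bounded (\<sigma> ` c)"
  proof -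
    obtain x r where "\<forall>y\<in>c. dist x y \<le> r" using \<open>bounded c\<close> by (auto simp: bounded_def)
    then have "\<forall>y\<in>\<sigma> ` c. dist (\<sigma> x) y \<le> r" by (auto simp: dist_reflect[OF axis_direction])
    then show ?thesis unfolding bounded_def by blast
  qed
  ultimately show ?thesis by (simp add: cells_def)
qed

lemma frontier_reflect: "frontier (\<sigma> ` S) = \<sigma> ` frontier S"
proof -
  have "homeomorphic_maps euclidean euclidean \<sigma> \<sigma>"
    by (simp add: homeomorphic_maps_def continuous_on_reflect)
  then have "homeomorphic_map euclidean euclidean \<sigma>" using homeomorphic_map_maps by blast
  then show ?thesis using homeomorphic_map_frontier_of[of euclidean euclidean \<sigma> S] by simp
qed

lemma reflect_bedges_iff [simp]: "\<sigma> ` e \<in> bedges E emb (\<sigma> ` c) \<longleftrightarrow> e \<in> bedges E emb c"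
proof -
  have "\<sigma> ` e \<in> bedges E emb (\<sigma> ` c)" if "e \<in> bedges E emb c" for e c
    using that by (auto simp: bedges_def path_image_emb_reflect frontier_reflect)
  from this[of "\<sigma> ` e" "\<sigma> ` c"] this[of e c] show ?thesis by auto
qed

text \<open>A cell that is not symmetric avoids the axis (points of the axis are fixed by the
  reflection, and distinct cells are disjoint), so by connectedness it lies on one side.\<close>
lemma asymmetric_cell_one_side:
  assumes c: "c \<in> cells V E emb" and "\<sigma> ` c \<noteq> c"
  shows "(\<forall>z\<in>c. side a w z > 0) \<or> (\<forall>z\<in>c. side a w z < 0)"
proof -
  have cc: "c \<in> components (- drawing V E emb)" "\<sigma> ` c \<in> components (- drawing V E emb)"
    using c reflect_cell[OF c] by (auto simp: cells_def)
  have nonzero: "side a w z \<noteq> 0" if "z \<in> c" for z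
  proof
    assume "side a w z = 0"
    then have "z \<in> \<sigma> ` c \<inter> c" using that reflect_eq_self_iff[OF axis_direction] by (metis IntI reflect_in_image_iff)
    then show False using components_eq[OF cc] \<open>\<sigma> ` c \<noteq> c\<close> by auto
  qed
  have "connected (side a w ` c)"
    using in_components_connected[OF cc(1)] axis_direction
    by (intro connected_continuous_image continuous_on_side)
  show ?thesis
  proof (rule ccontr)
    assume "\<not> ?thesis"
    then obtain x y where "x \<in> c" "y \<in> c" "side a w x < 0" "side a w y > 0"
      using nonzero by (auto simp: not_less le_less)
    then have "0 \<in> side a w ` c"
      using connected_contains_Icc[OF \<open>connected (side a w ` c)\<close>, of "side a w x" "side a w y"] by force
    then show False using nonzero by auto
  qed
qed

lemma bedges_mirror_cell_disjoint:
  assumes c: "c \<in> cells V E emb" and "\<sigma> ` c \<noteq> c"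
  shows "bedges E emb c \<inter> bedges E emb (\<sigma> ` c) = {}"
proof (rule ccontr)
  assume "\<not> ?thesis"
  then obtain e where e: "e \<in> bedges E emb c" "e \<in> bedges E emb (\<sigma> ` c)" by blast
  have on_axis: "path_image (emb e) \<subseteq> {z. side a w z = 0}"
    if pos: "\<forall>z\<in>c. side a w z > 0" and "e \<in> bedges E emb c" "e \<in> bedges E emb (\<sigma> ` c)" for c
  proof
    fix z assume z: "z \<in> path_image (emb e)"
    have closed: "closed {z. side a w z \<ge> 0}" "closed {z. side a w z \<le> 0}"
      using continuous_on_side[OF axis_direction]
      by (auto intro: closed_Collect_le continuous_on_const)
    have "closure c \<subseteq> {z. side a w z \<ge> 0}" using pos closed by (intro closure_minimal) auto
    moreover have "closure (\<sigma> ` c) \<subseteq> {z. side a w z \<le> 0}" using pos closed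
      by (intro closure_minimal) (auto simp: side_reflect[OF axis_direction] less_imp_le)
    moreover have "z \<in> closure c" "z \<in> closure (\<sigma> ` c)"
      using that(2,3) z by (auto simp: bedges_def frontier_def)
    ultimately have "side a w z \<ge> 0" "side a w z \<le> 0" by blast+
    then show "z \<in> {z. side a w z = 0}" by simp
  qed
  from asymmetric_cell_one_side[OF assms(1,2)] have "path_image (emb e) \<subseteq> {z. side a w z = 0}"
  proof
    assume "\<forall>z\<in>c. side a w z > 0"
    then show ?thesis using on_axis e by blast
  next
    assume "\<forall>z\<in>c. side a w z < 0"
    then have "\<forall>z\<in>\<sigma> ` c. side a w z > 0" by (auto simp: side_reflect[OF axis_direction])
    then show ?thesis using on_axis[of "\<sigma> ` c"] e by simp
  qed
  then have "path_image (emb e) \<subseteq> sym_axis a w"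
    using mem_sym_axis_iff[OF axis_direction] by blast
  then show False using no_edge_on_axis e by (auto simp: bedges_def)
qed

text \<open>A symmetric edge not crossing the axis would have both ends on the axis; being an arc
  mapped onto itself by the reflection, it would then lie on the axis.\<close>
lemma symmetric_edge_crosses_axis:
  assumes e: "e \<in> E" and sym: "\<sigma> ` e = e"
  shows "crosses_axis a w e"
proof -
  obtain u v where uv: "u \<noteq> v" "e = {u, v}" using edgeE[OF e] by metis
  then have "{\<sigma> u, \<sigma> v} = {u, v}" using sym by simp
  then consider "\<sigma> u = u" "\<sigma> v = v" | "\<sigma> u = v" by (metis doubleton_eq_iff)
  then show ?thesis
  proof cases
    case 1
    have "pathstart (emb e) \<in> e" "pathfinish (emb e) \<in> e" using emb_ends[OF e] by blast+
    then have ends: "\<sigma> (pathstart (emb e)) = pathstart (emb e)" "\<sigma> (pathfinish (emb e)) = pathfinish (emb e)"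
      using 1 uv by auto
    have "\<sigma> ` path_image (emb e) = path_image (emb e)" using path_image_emb_reflect[OF e] sym by simp
    then have "\<sigma> z = z" if "z \<in> path_image (emb e)" for z
      using arc_involution_fixes_points[OF arc_emb[OF e] continuous_on_reflect _ _ ends that] by simp
    then have "path_image (emb e) \<subseteq> sym_axis a w"
      using reflect_eq_self_iff[OF axis_direction] mem_sym_axis_iff[OF axis_direction] by blast
    then show ?thesis using no_edge_on_axis e by auto
  next
    case 2
    then have "side a w v = - side a w u" "side a w u \<noteq> 0"
      using side_reflect[OF axis_direction, of a u] reflect_eq_self_iff[OF axis_direction, of a u] uv
      by auto
    moreover have "e = {v, u}" using uv by auto
    ultimately show ?thesis using uv unfolding crosses_axis_def
      by (cases "side a w u < 0")
        (metis neg_0_less_iff_less, metis neg_less_0_iff_less linorder_neqE_linordered_idom)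
  qed
qed

text \<open>The reply to an arrow is its mirror image with the direction reversed; thus the arrow on
  an edge crossing the axis is its own reply, and sinks correspond to sources.\<close>
definition mirror :: "complex \<times> complex \<Rightarrow> complex \<times> complex" where
  "mirror p = (\<sigma> (snd p), \<sigma> (fst p))"

lemma mirror_pair [simp]: "mirror (u, v) = (\<sigma> v, \<sigma> u)"
  by (simp add: mirror_def)

lemma mirror_mirror [simp]: "mirror (mirror p) = p"
  by (simp add: mirror_def)

lemma inj_mirror: "inj mirror"
  by (metis injI mirror_mirror)

lemma mirror_in_image_iff [simp]: "mirror p \<in> mirror ` M \<longleftrightarrow> p \<in> M"
  by (simp add: inj_image_mem_iff[OF inj_mirror])

lemma arrow_edge_mirror: "arrow_edge (mirror p) = \<sigma> ` arrow_edge p"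
  by (auto simp: mirror_def)

lemma marked_mirror_iff: "marked (mirror ` M) (\<sigma> ` e) \<longleftrightarrow> marked M e"
proof -
  have "marked (mirror ` M) (\<sigma> ` e) \<longleftrightarrow> (\<exists>p\<in>M. \<sigma> ` arrow_edge p = \<sigma> ` e)"
    by (auto simp: marked_iff arrow_edge_mirror)
  also have "\<dots> \<longleftrightarrow> marked M e"
    by (metis marked_iff reflect_image_image)
  finally show ?thesis .
qed

lemma is_sink_mirror_iff: "is_sink E (mirror ` M) (\<sigma> x) \<longleftrightarrow> is_source E M x"
proof -
  have "is_sink E (mirror ` M) (\<sigma> x) \<longleftrightarrow> (\<forall>y. {\<sigma> x, \<sigma> y} \<in> E \<longrightarrow> (\<sigma> y, \<sigma> x) \<in> mirror ` M)"
    unfolding is_sink_def by (metis reflect_involutive)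
  also have "\<dots> \<longleftrightarrow> is_source E M x"
    unfolding is_source_def using mirror_in_image_iff[of "(x, _)" M] by simp
  finally show ?thesis .
qed

lemma is_source_mirror_iff: "is_source E (mirror ` M) (\<sigma> x) \<longleftrightarrow> is_sink E M x"
proof -
  have "is_source E (mirror ` M) (\<sigma> x) \<longleftrightarrow> (\<forall>y. {\<sigma> x, \<sigma> y} \<in> E \<longrightarrow> (\<sigma> x, \<sigma> y) \<in> mirror ` M)"
    unfolding is_source_def by (metis reflect_involutive)
  also have "\<dots> \<longleftrightarrow> is_sink E M x"
    unfolding is_sink_def using mirror_in_image_iff[of "(_, x)" M] by simp
  finally show ?thesis .
qed

lemma legal_move_mirror:
  assumes "legal_move E M p"
  shows "legal_move E (mirror ` M) (mirror p)"
proof -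
  obtain u v where p: "p = (u, v)" by fastforce
  have "\<not> marked (mirror ` M) {\<sigma> v, \<sigma> u}"
    using assms marked_mirror_iff[of M "{u, v}"] by (simp add: legal_move_def p insert_commute)
  moreover have "insert (\<sigma> v, \<sigma> u) (mirror ` M) = mirror ` insert (u, v) M" by simp
  ultimately show ?thesis
    using assms unfolding legal_move_def p fst_conv snd_conv mirror_pair
    by (simp add: insert_commute is_sink_mirror_iff is_source_mirror_iff del: image_insert)
qed

text \<open>The directed arc of the reply is a reparametrization of the reflected directed arc,
  traversed backwards; reflection turns winding numbers into minus their conjugates.\<close>
lemma winding_number_darc_mirror:
  assumes e: "{u, v} \<in> E" and z: "z \<notin> path_image (emb {u, v})"
  shows "winding_number (darc emb (mirror (u, v))) (\<sigma> z) = cnj (winding_number (darc emb (u, v)) z)"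
proof -
  let ?g = "darc emb (u, v)" and ?h = "darc emb (\<sigma> v, \<sigma> u)"
  have e': "{\<sigma> v, \<sigma> u} \<in> E" using e by (simp add: insert_commute)
  have arc: "arc (\<sigma> \<circ> ?g)"
    using arc_darc[OF e] inj_on_subset[OF inj_reflect] by (intro arc_compose continuous_on_reflect) auto
  have reflected: "path_image (emb {\<sigma> v, \<sigma> u}) = \<sigma> ` path_image (emb {u, v})"
    using path_image_emb_reflect[OF e] by (simp add: insert_commute)
  then have image: "path_image (reversepath (\<sigma> \<circ> ?g)) = path_image ?h"
    by (simp add: path_image_compose path_image_darc[OF e] path_image_darc[OF e'])
  have "winding_number ?h (\<sigma> z) = winding_number (reversepath (\<sigma> \<circ> ?g)) (\<sigma> z)"
    using arc arc_darc[OF e'] image z e e' reflected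
    by (intro winding_number_arc_eq)
      (auto simp: arc_reversepath pathstart_darc pathfinish_darc path_image_darc
         pathstart_compose pathfinish_compose)
  also have "\<dots> = - winding_number (\<sigma> \<circ> ?g) (\<sigma> z)"
    using arc z e by (intro winding_number_reversepath) (auto simp: arc_imp_path path_image_compose path_image_darc)
  also have "\<dots> = cnj (winding_number ?g z)"
    using winding_number_reflect[OF axis_direction, of ?g z] arc_darc[OF e] z e
    by (simp add: arc_imp_path path_image_darc)
  finally show ?thesis by simp
qed

lemma boundary_arrows_mirror: "boundary_arrows (mirror ` M) (\<sigma> ` c) = mirror ` boundary_arrows M c"
proof (rule set_eqI)
  fix q
  have "q \<in> mirror ` S \<longleftrightarrow> mirror q \<in> S" for S using mirror_in_image_iff[of "mirror q"] by simp
  moreover have "arrow_edge q \<in> bedges E emb (\<sigma> ` c) \<longleftrightarrow> arrow_edge (mirror q) \<in> bedges E emb c"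
    using reflect_bedges_iff[of "arrow_edge (mirror q)" c] by (simp add: arrow_edge_mirror)
  ultimately show "q \<in> boundary_arrows (mirror ` M) (\<sigma> ` c) \<longleftrightarrow> q \<in> mirror ` boundary_arrows M c"
    by simp
qed

lemma cycle_cell_mirror:
  assumes cycle: "cycle_cell V E emb M c"
  shows "cycle_cell V E emb (mirror ` M) (\<sigma> ` c)"
proof -
  have c: "c \<in> cells V E emb" and marked: "\<forall>e\<in>bedges E emb c. marked M e"
    using cycle by (auto simp: cycle_cell_def)
  obtain s where s: "s \<in> {1, -1}" and wind: "\<And>z. z \<notin> drawing V E emb \<Longrightarrow>
      (\<Sum>p\<in>boundary_arrows M c. winding_number (darc emb p) z) = (if z \<in> c then s else 0)"
    using cycle unfolding cycle_cell_def by blast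
  have "marked (mirror ` M) e" if "e \<in> bedges E emb (\<sigma> ` c)" for e
    using that marked marked_mirror_iff[of M "\<sigma> ` e"] reflect_bedges_iff[of "\<sigma> ` e" c] by simp
  moreover have "(\<Sum>p\<in>boundary_arrows (mirror ` M) (\<sigma> ` c). winding_number (darc emb p) z)
      = (if z \<in> \<sigma> ` c then s else 0)" if z: "z \<notin> drawing V E emb" for z
  proof -
    have "(\<Sum>p\<in>boundary_arrows (mirror ` M) (\<sigma> ` c). winding_number (darc emb p) z)
        = (\<Sum>p\<in>boundary_arrows M c. winding_number (darc emb (mirror p)) z)"
      by (simp add: boundary_arrows_mirror sum.reindex inj_on_subset[OF inj_mirror])
    also have "\<dots> = (\<Sum>p\<in>boundary_arrows M c. cnj (winding_number (darc emb p) (\<sigma> z)))"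
    proof (rule sum.cong[OF refl])
      fix p assume "p \<in> boundary_arrows M c"
      then have "arrow_edge p \<in> E" by (auto simp: bedges_def)
      moreover have "\<sigma> z \<notin> path_image (emb (arrow_edge p))"
        using reflect_in_drawing_iff[of z] z \<open>arrow_edge p \<in> E\<close> unfolding drawing_def by blast
      ultimately show "winding_number (darc emb (mirror p)) z = cnj (winding_number (darc emb p) (\<sigma> z))"
        using winding_number_darc_mirror[of "fst p" "snd p" "\<sigma> z"] by simp
    qed
    also have "\<dots> = cnj (if \<sigma> z \<in> c then s else 0)"
      using wind[of "\<sigma> z"] z by (simp flip: cnj_sum)
    also have "\<dots> = (if z \<in> \<sigma> ` c then s else 0)"
      using s by (auto simp: mem_reflect_image_iff)
    finally show ?thesis .
  qed
  ultimately show ?thesis using reflect_cell[OF c] s unfolding cycle_cell_def by blast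
qed

subsection \<open>The mirror strategy\<close>

definition mirror_symmetric :: "(complex \<times> complex) set \<Rightarrow> bool" where
  "mirror_symmetric M \<longleftrightarrow> mirror ` M = M"

definition fixed_edges_marked :: "(complex \<times> complex) set \<Rightarrow> bool" where
  "fixed_edges_marked M \<longleftrightarrow> (\<forall>e\<in>E. \<sigma> ` e = e \<longrightarrow> marked M e)"

lemma fixed_edges_markedI: "(\<And>e. e \<in> E \<Longrightarrow> crosses_axis a w e \<Longrightarrow> marked M e) \<Longrightarrow> fixed_edges_marked M"
  using symmetric_edge_crosses_axis by (auto simp: fixed_edges_marked_def)

lemma mirror_symmetric_insert_reply:
  "mirror_symmetric M \<Longrightarrow> mirror_symmetric (insert (mirror p) (insert p M))"
  unfolding mirror_symmetric_def by (simp add: insert_commute[of p])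

lemma fixed_edges_marked_mono: "fixed_edges_marked M \<Longrightarrow> M \<subseteq> N \<Longrightarrow> fixed_edges_marked N"
  unfolding fixed_edges_marked_def by (blast intro: marked_mono)

lemma symmetric_cell_not_completed:
  assumes "mirror_symmetric M" "fixed_edges_marked M" "legal_move E M r"
    and "\<sigma> ` c = c" "arrow_edge r \<in> bedges E emb c"
  shows "\<not> cycle_cell V E emb (insert r M) c"
proof
  assume "cycle_cell V E emb (insert r M) c"
  moreover have "\<sigma> ` arrow_edge r \<in> bedges E emb c"
    using reflect_bedges_iff[of "arrow_edge r" c] assms(4,5) by simp
  ultimately have "marked (insert r M) (\<sigma> ` arrow_edge r)" by (simp add: cycle_cell_def)
  then consider "\<sigma> ` arrow_edge r = arrow_edge r" | "marked M (\<sigma> ` arrow_edge r)"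
    by (auto simp: marked_insert)
  then have "marked M (arrow_edge r)"
    using assms(1,2) marked_mirror_iff[of M "arrow_edge r"] assms(3)
    by cases (auto simp: mirror_symmetric_def fixed_edges_marked_def legal_move_def)
  then show False using assms(3) by (simp add: legal_move_def)
qed

text \<open>A move closing a cycle cell c after the reply q must use the edge of q, or it would have
  closed c before q.  Then c is not symmetric, the edge of q is not on the boundary of the mirror
  image of c, and the mirror of the move would already have closed that mirror image before q.\<close>
lemma no_winning_move_after_reply:
  assumes sym: "mirror_symmetric (insert q M)" and fixed: "fixed_edges_marked (insert q M)"
    and no_win: "\<not> has_winning_move M" and no_cycle: "\<not> has_cycle_cell V E emb (insert q M)"
  shows "\<not> has_winning_move (insert q M)"
proof
  assume "has_winning_move (insert q M)"
  then obtain r c where r: "legal_move E (insert q M) r"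
    and cycle: "cycle_cell V E emb (insert r (insert q M)) c"
    by (auto simp: has_winning_move_def has_cycle_cell_def)
  have "legal_move E M r" using legal_move_antimono[OF r] by blast
  have r_c: "arrow_edge r \<in> bedges E emb c"
  proof (rule ccontr)
    assume "arrow_edge r \<notin> bedges E emb c"
    then have "cycle_cell V E emb (insert q M) c" by (intro cycle_cell_cong[OF _ cycle]) auto
    then show False using no_cycle by (auto simp: has_cycle_cell_def)
  qed
  have q_c: "arrow_edge q \<in> bedges E emb c"
  proof (rule ccontr)
    assume "arrow_edge q \<notin> bedges E emb c"
    then have "cycle_cell V E emb (insert r M) c" by (intro cycle_cell_cong[OF _ cycle]) auto
    then show False using no_win \<open>legal_move E M r\<close>
      unfolding has_winning_move_def has_cycle_cell_def by blast
  qed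
  have "\<sigma> ` c \<noteq> c" using symmetric_cell_not_completed[OF sym fixed r _ r_c] cycle by blast
  then have q_mirror_c: "arrow_edge q \<notin> bedges E emb (\<sigma> ` c)"
    using bedges_mirror_cell_disjoint[of c] q_c cycle by (auto simp: cycle_cell_def)
  have "mirror ` insert r (insert q M) = insert (mirror r) (insert q M)"
    using sym by (simp add: mirror_symmetric_def)
  then have "cycle_cell V E emb (insert (mirror r) (insert q M)) (\<sigma> ` c)"
    using cycle_cell_mirror[OF cycle] by simp
  then have "cycle_cell V E emb (insert (mirror r) M) (\<sigma> ` c)"
    by (rule cycle_cell_cong[rotated]) (use q_mirror_c in auto)
  moreover have "legal_move E M (mirror r)"
    using legal_move_mirror[OF r] sym unfolding mirror_symmetric_def
    by (auto intro: legal_move_antimono)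
  ultimately show False using no_win unfolding has_winning_move_def has_cycle_cell_def by blast
qed

lemma mirror_reply_legal:
  assumes "mirror_symmetric M" "fixed_edges_marked M" and p: "legal_move E M p"
  shows "legal_move E (insert p M) (mirror p)"
proof -
  obtain u v where uv: "p = (u, v)" by fastforce
  have "\<sigma> ` {u, v} \<noteq> {u, v}"
    using assms p by (auto simp: fixed_edges_marked_def legal_move_def uv)
  then have "{\<sigma> v, \<sigma> u} \<noteq> {u, v}" "u \<noteq> \<sigma> v" "v \<noteq> \<sigma> u"
    by (auto simp: insert_commute)
  moreover have "legal_move E M (mirror p)"
    using legal_move_mirror[OF p] assms(1) by (simp add: mirror_symmetric_def)
  ultimately show ?thesis using p by (intro legal_move_insert) (auto simp: uv)
qed

text \<open>Every move is answered by a move closing a cycle cell if there is one, and otherwise by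
  its mirror reply, which restores the three hypotheses.\<close>
lemma mirror_strategy:
  assumes "mirror_symmetric M" "fixed_edges_marked M" "\<not> has_winning_move M"
  shows "loses V E emb M"
  using assms
proof (induction "card {e \<in> E. \<not> marked M e}" arbitrary: M rule: less_induct)
  case less
  show ?case
  proof (rule lose)
    fix p assume p: "legal_move E M p"
    let ?N = "insert (mirror p) (insert p M)"
    have reply: "legal_move E (insert p M) (mirror p)"
      using mirror_reply_legal[OF less.prems(1,2) p] .
    have "wins V E emb (insert p M)"
    proof (cases "has_winning_move (insert p M) \<or> has_cycle_cell V E emb ?N")
      case True
      then show ?thesis
        using win_cycle[of E "insert p M" _ V emb] reply unfolding has_winning_move_def by blast
    next
      case False
      have sym: "mirror_symmetric ?N" using mirror_symmetric_insert_reply[OF less.prems(1)] .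
      have fixed: "fixed_edges_marked ?N" by (rule fixed_edges_marked_mono[OF less.prems(2)]) auto
      have fewer: "card {e \<in> E. \<not> marked ?N e} < card {e \<in> E. \<not> marked M e}"
        using card_unmarked_edges_less[OF p] by blast
      have "\<not> has_winning_move ?N"
        using no_winning_move_after_reply[OF sym fixed] False by blast
      then have "loses V E emb ?N" by (rule less.hyps[OF fewer sym fixed])
      then show ?thesis by (rule win_move[OF reply])
    qed
    moreover have "\<not> has_cycle_cell V E emb (insert p M)"
      using less.prems(3) p unfolding has_winning_move_def by blast
    ultimately show "\<not> has_cycle_cell V E emb (insert p M) \<and> wins V E emb (insert p M)" by blast
  qed
qed

lemma unique_crossing_edge:
  assumes "{e \<in> E. crosses_axis a w e} = {f}"
  obtains u where "f = {u, \<sigma> u}" "{u, \<sigma> u} \<in> E"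
proof -
  have "f \<in> {e \<in> E. crosses_axis a w e}" using assms by simp
  then have "f \<in> E" "crosses_axis a w f" by simp_all
  have unique: "e = f" if "e \<in> E" "crosses_axis a w e" for e
  proof -
    have "e \<in> {e \<in> E. crosses_axis a w e}" using that by simp
    then show ?thesis using assms by simp
  qed
  obtain u v where f: "f = {u, v}" and u: "side a w u < 0" and v: "side a w v > 0"
    using \<open>crosses_axis a w f\<close> unfolding crosses_axis_def by blast
  have "side a w (\<sigma> v) < 0" "side a w (\<sigma> u) > 0"
    using u v by (simp_all add: side_reflect[OF axis_direction])
  moreover have "\<sigma> ` f = {\<sigma> v, \<sigma> u}" by (auto simp: f)
  ultimately have "crosses_axis a w (\<sigma> ` f)" unfolding crosses_axis_def by blast
  moreover have "\<sigma> ` f \<in> E" using \<open>f \<in> E\<close> by simp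
  ultimately have "\<sigma> ` f = f" using unique by blast
  then have "\<sigma> u \<in> {u, v}" using f by blast
  moreover have "\<sigma> u \<noteq> u" using u reflect_eq_self_iff[OF axis_direction, of a u] by auto
  ultimately have "f = {u, \<sigma> u}" using f by auto
  then show ?thesis using that \<open>f \<in> E\<close> by blast
qed

lemma crossing_opening_legal:
  assumes e: "{u, \<sigma> u} \<in> E" and "card V \<noteq> 2"
  shows "legal_move E {} (u, \<sigma> u)"
proof -
  have "\<exists>x. {u, x} \<in> E \<and> x \<noteq> \<sigma> u"
  proof (rule ccontr)
    assume "\<not> ?thesis"
    then have only_u: "y = \<sigma> u" if "{u, y} \<in> E" for y using that by blast
    moreover have "y = u" if "{\<sigma> u, y} \<in> E" for y
      using only_u[of "\<sigma> y"] that reflect_doubleton_edge_iff[of "\<sigma> u" y]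
      by (metis reflect_involutive)
    ultimately have "V = {u, \<sigma> u}" using single_edge_board[OF e] by blast
    then show False using assms edge_distinct[OF e] by simp
  qed
  then obtain x where x: "{u, x} \<in> E" "x \<noteq> \<sigma> u" by blast
  have "\<sigma> x \<noteq> u" using x(2) by auto
  have "\<not> is_source E {(u, \<sigma> u)} u" using x by (auto simp: is_source_def)
  moreover have "\<not> is_sink E {(u, \<sigma> u)} (\<sigma> u)"
    using x(1) \<open>\<sigma> x \<noteq> u\<close> reflect_doubleton_edge_iff[of u x] unfolding is_sink_def by blast
  moreover have "\<not> is_sink E {(u, \<sigma> u)} u" "\<not> is_source E {(u, \<sigma> u)} (\<sigma> u)"
    using e edge_distinct[OF e] by (auto simp: is_sink_def is_source_def insert_commute)
  ultimately show ?thesis using e by (simp add: legal_move_def marked_def)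
qed

end

theorem corollary5p3:
  fixes V :: "complex set" and E :: "complex set set"
    and emb :: "complex set \<Rightarrow> real \<Rightarrow> complex" and a w :: complex
  assumes "board V E emb"
    and "w \<noteq> 0"
    and "reflection_invariant V E emb a w"
    and "\<forall>e\<in>E. \<not> path_image (emb e) \<subseteq> sym_axis a w"
    and "card {e \<in> E. crosses_axis a w e} \<le> 1"
  shows "({e \<in> E. crosses_axis a w e} = {} \<longrightarrow> loses V E emb {})
       \<and> (card {e \<in> E. crosses_axis a w e} = 1 \<and> card V \<noteq> 2 \<longrightarrow> wins V E emb {})"
proof -
  interpret symmetric_board V E emb a w
    using assms(1-4) by unfold_locales
  show ?thesis
  proof (intro conjI impI)
    assume "{e \<in> E. crosses_axis a w e} = {}"
    then show "loses V E emb {}"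
      using mirror_strategy no_winning_opening fixed_edges_markedI by (auto simp: mirror_symmetric_def)
  next
    assume "card {e \<in> E. crosses_axis a w e} = 1 \<and> card V \<noteq> 2"
    then obtain f where crossing: "{e \<in> E. crosses_axis a w e} = {f}" and "card V \<noteq> 2"
      by (auto simp: card_1_singleton_iff)
    obtain u where f: "f = {u, \<sigma> u}" and e: "{u, \<sigma> u} \<in> E"
      using unique_crossing_edge[OF crossing] by blast
    let ?p = "(u, \<sigma> u)"
    have opening_move: "legal_move E {} ?p" using crossing_opening_legal[OF e \<open>card V \<noteq> 2\<close>] .
    have sym: "mirror_symmetric {?p}" by (simp add: mirror_symmetric_def)
    have fixed: "fixed_edges_marked {?p}" using crossing f by (intro fixed_edges_markedI) (auto simp: marked_def)
    have "\<not> has_winning_move {?p}"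
      using no_winning_move_after_reply[of ?p "{}"] sym fixed no_winning_opening single_arrow_not_cycle_cell
      by (auto simp: has_cycle_cell_def)
    then have "loses V E emb {?p}" using mirror_strategy sym fixed by blast
    then show "wins V E emb {}" using win_move[OF opening_move] by simp
  qed
qed

end
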